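(* Assume (A1) and (A2). Then for all $\mathbf{z}\in\mathbb{W}(b^* )^2$ and $\boldsymbol\vartheta\in I_{2\pi}^2$, $$|d(\mathbf{z},\boldsymbol\vartheta)|\ge C_1(\zeta(\boldsymbol\vartheta))^2.$$
   Context: $I_{2\pi}=[0,2\pi)$. Let $\Gamma=[\gamma_0,\gamma_1,\gamma_2]^T:\mathbb{R}^2\to\mathbb{R}^3$ have $2\pi$-biperiodic differentiable components, with $\Gamma|_{I_{2\pi}^2}$ parametrizing the boundary of a bounded open region in $\mathbb{R}^3$ that is $C^\infty$-diffeomorphic to a torus. For $\mathbf{a}\in\mathbb{C}^m$, $\|\mathbf{a}\|_2=(\sum_j|a_j|^2)^{1/2}$; for a matrix, $\|\cdot\|_2$ is the induced operator norm. For $\boldsymbol\theta\in\mathbb{R}^2$, $\zeta(\boldsymbol\theta)=\sqrt{\mathrm{dist}(\theta_0,2\pi\mathbb{Z})^2+\mathrm{dist}(\theta_1,2\pi\mathbb{Z})^2}$ (for $\boldsymbol\theta\in I_{2\pi}^2$ this is $\sqrt{(\min\{\theta_0,2\pi-\theta_0\})^2+(\min\{\theta_1,2\pi-\theta_1\})^2}$). For $r>0$, $\mathbb{W}(r)=\{z\in\mathbb{C}:|\mathrm{Im}\,z|<r\}$. (A1): there is $C_0>0$ with $\|\Gamma(\boldsymbol\theta)-\Gamma(\boldsymbol\eta)\|_2\ge C_0\zeta(\boldsymbol\theta-\boldsymbol\eta)$ for all $\boldsymbol\theta,\boldsymbol\eta\in I_{2\pi}^2$. (A2): there is $R_0>0$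 such that for each $j$ the ($2\pi$-biperiodic) function $\gamma_j$ extends analytically to the closure of $\mathbb{W}(R_0)^2\subset\mathbb{C}^2$ (extensions still denoted $\gamma_j$, $\Gamma$). For $\mathbf{z}=[z_0,z_1]$, $\mathrm{Re}(\mathbf{z})=[\mathrm{Re}\,z_0,\mathrm{Re}\,z_1]$; $D\gamma_j(\mathbf{z})=[\partial\gamma_j/\partial z_0,\partial\gamma_j/\partial z_1](\mathbf{z})$ is the complex gradient and $\mathbf{H}_j(\mathbf{z})$ the $2\times2$ matrix of complex second partial derivatives of $\gamma_j$. Let $M_{0,j}=\sup_{\mathbf{z}\in\mathbb{W}(R_0)^2}\|D\gamma_j(\mathbf{z})+D\gamma_j(\mathrm{Re}(\mathbf{z}))\|_2$, $M_{1,j}=\sup_{\mathbf{z}\in\mathbb{W}(R_0)^2}\|\mathbf{H}_j(\mathbf{z})\|_2$, $M_0=(\sum_{j=0}^2M_{0,j}^2)^{1/2}$, $M_1=(\sum_{j=0}^2M_{1,j}^2)^{1/2}$. Fix $b$ with $0<b<\min\{\frac{C_0^2}{\sqrt2M_0M_1},\frac{R_0}{2}\}$, let $b^*=\frac12\big(b+\min\{\frac{C_0^2}{\sqrt2M_0M_1},\frac{R_0}{2}\}\big)$ and $C_1=C_0^2-\sqrt2M_0M_1b^*$. For $\mathbf{z}\in\mathbb{W}(R_0)^2$ and $\boldsymbol\vartheta\in I_{2\pi}^2$, $d(\mathbf{z},\boldsymbol\vartheta)=\sum_{j=0}^2(\gamma_j(\mathbf{z})-\gamma_j(\mathbf{z}+\boldsymbol\vartheta))^2$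 (the analytic extension of $\|\Gamma(\boldsymbol\theta)-\Gamma(\boldsymbol\theta+\boldsymbol\vartheta)\|_2^2$). *)

theory Defs
  imports "HOL-Analysis.Analysis"
begin

definition strip2 :: "real \<Rightarrow> (complex \<times> complex) set" where
  "strip2 r = {z. \<bar>Im (fst z)\<bar> < r \<and> \<bar>Im (snd z)\<bar> < r}"

definition cstrip2 :: "real \<Rightarrow> (complex \<times> complex) set" where
  "cstrip2 r = {z. \<bar>Im (fst z)\<bar> \<le> r \<and> \<bar>Im (snd z)\<bar> \<le> r}"

definition holo2_on :: "(complex \<times> complex \<Rightarrow> complex) \<Rightarrow> (complex \<times> complex) set \<Rightarrow> bool" where
  "holo2_on f U \<longleftrightarrow> (\<forall>z\<in>U. \<exists>a b. (f has_derivative (\<lambda>w. a * fst w + b * snd w)) (at z))"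

definition analytic2_on_cstrip :: "(complex \<times> complex \<Rightarrow> complex) \<Rightarrow> real \<Rightarrow> bool" where
  "analytic2_on_cstrip f R \<longleftrightarrow> (\<exists>U. open U \<and> cstrip2 R \<subseteq> U \<and> holo2_on f U)"

definition pd0 :: "(complex \<times> complex \<Rightarrow> complex) \<Rightarrow> complex \<times> complex \<Rightarrow> complex" where
  "pd0 f z = deriv (\<lambda>w. f (w, snd z)) (fst z)"

definition pd1 :: "(complex \<times> complex \<Rightarrow> complex) \<Rightarrow> complex \<times> complex \<Rightarrow> complex" where
  "pd1 f z = deriv (\<lambda>w. f (fst z, w)) (snd z)"

definition ReZ :: "complex \<times> complex \<Rightarrow> complex \<times> complex" where
  "ReZ z = (complex_of_real (Re (fst z)), complex_of_real (Re (snd z)))"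

(* induced 2-norm of an m x n complex matrix A (entries A i j, i<m, j<n) *)
definition opnorm2 :: "(nat \<Rightarrow> nat \<Rightarrow> complex) \<Rightarrow> nat \<Rightarrow> nat \<Rightarrow> real" where
  "opnorm2 A m n = Sup {sqrt (\<Sum>i<m. (cmod (\<Sum>j<n. A i j * x j))\<^sup>2) | x.
                          sqrt (\<Sum>j<n. (cmod (x j))\<^sup>2) \<le> 1}"

(* complex gradient D f(z) as a 1 x 2 matrix *)
definition grad :: "(complex \<times> complex \<Rightarrow> complex) \<Rightarrow> complex \<times> complex \<Rightarrow> nat \<Rightarrow> nat \<Rightarrow> complex" where
  "grad f z i j = (if j = 0 then pd0 f z else pd1 f z)"

definition hess :: "(complex \<times> complex \<Rightarrow> complex) \<Rightarrow> complex \<times> complex \<Rightarrow> nat \<Rightarrow> nat \<Rightarrow> complex" where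
  "hess f z i j =
     (if i = 0 then (if j = 0 then pd0 (pd0 f) z else pd1 (pd0 f) z)
      else (if j = 0 then pd0 (pd1 f) z else pd1 (pd1 f) z))"

definition M0j :: "(complex \<times> complex \<Rightarrow> complex) \<Rightarrow> real \<Rightarrow> real" where
  "M0j f R = (SUP z\<in>strip2 R. opnorm2 (\<lambda>i j. grad f z i j + grad f (ReZ z) i j) 1 2)"

definition M1j :: "(complex \<times> complex \<Rightarrow> complex) \<Rightarrow> real \<Rightarrow> real" where
  "M1j f R = (SUP z\<in>strip2 R. opnorm2 (hess f z) 2 2)"

definition dist2pi :: "real \<Rightarrow> real" where
  "dist2pi t = Inf {\<bar>t - 2 * pi * real_of_int k\<bar> | k. True}"

definition zeta :: "real \<times> real \<Rightarrow> real" where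
  "zeta th = sqrt ((dist2pi (fst th))\<^sup>2 + (dist2pi (snd th))\<^sup>2)"

definition I2pi :: "real set" where
  "I2pi = {0..<2*pi}"

definition GammaR :: "(nat \<Rightarrow> complex \<times> complex \<Rightarrow> complex) \<Rightarrow> real \<times> real \<Rightarrow> real^3" where
  "GammaR g th = vector [Re (g 0 (complex_of_real (fst th), complex_of_real (snd th))),
                         Re (g 1 (complex_of_real (fst th), complex_of_real (snd th))),
                         Re (g 2 (complex_of_real (fst th), complex_of_real (snd th)))]"

fun pderivs :: "'n::finite list \<Rightarrow> (real^'n \<Rightarrow> real) \<Rightarrow> real^'n \<Rightarrow> real" where
  "pderivs [] f = f"
| "pderivs (i # is) f = (\<lambda>x. deriv (\<lambda>t. pderivs is f (x + t *\<^sub>R axis i 1)) 0)"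

definition smooth_on :: "(real^'n::finite) set \<Rightarrow> (real^'n \<Rightarrow> real^'m) \<Rightarrow> bool" where
  "smooth_on S f \<longleftrightarrow>
     (\<forall>k is. continuous_on S (pderivs is (\<lambda>y. f y $ k)) \<and>
        (\<forall>i. \<forall>x\<in>S. (\<lambda>t. pderivs is (\<lambda>y. f y $ k) (x + t *\<^sub>R axis i 1)) differentiable (at 0)))"

definition solid_torus :: "(real^3) set" where
  "solid_torus = {x. (sqrt ((x$1)\<^sup>2 + (x$2)\<^sup>2) - 2)\<^sup>2 + (x$3)\<^sup>2 < 1}"

definition diffeomorphic_Cinf :: "(real^3) set \<Rightarrow> (real^3) set \<Rightarrow> bool" where
  "diffeomorphic_Cinf A B \<longleftrightarrow>
     (\<exists>\<phi> \<psi>. smooth_on A \<phi> \<and> smooth_on B \<psi> \<and> \<phi> ` A = B \<and> \<psi> ` B = A \<and>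
            (\<forall>x\<in>A. \<psi> (\<phi> x) = x) \<and> (\<forall>y\<in>B. \<phi> (\<psi> y) = y))"

end

theory Submission
  imports Defs "HOL-Complex_Analysis.Complex_Analysis" "HOL-Library.Periodic_Fun"
begin

text \<open>
  Write \<open>z = x + i y\<close> with \<open>x\<close> real and \<open>F j w = \<gamma> j w - \<gamma> j (w + \<theta>)\<close>, so that
  \<open>d(z, \<theta>) = (\<Sum>j. (F j z)\<^sup>2)\<close>. At the real point, \<open>d(x, \<theta>) = \<parallel>\<Gamma> x - \<Gamma> (x + \<theta>)\<parallel>\<^sup>2\<close> is at
  least \<open>C0\<^sup>2 \<zeta>(\<theta>)\<^sup>2\<close> by (A1), and \<open>d(z, \<theta>) - d(x, \<theta>) = (\<Sum>j. (F j z + F j x) (F j z - F j x))\<close>.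
  The mean value theorem along \<open>s \<mapsto> w + s \<theta>\<close> bounds the first factor by \<open>M0j |\<theta>|\<close>;
  applied once more along the vertical segment from \<open>x\<close> to \<open>z\<close>, it bounds the second one by
  \<open>M1j |y| |\<theta>|\<close>. After replacing \<open>\<theta>\<close> by its representative modulo \<open>2\<pi>\<close> of norm \<open>\<zeta>(\<theta>)\<close>,
  Cauchy-Schwarz and \<open>|y| \<le> sqrt 2 b*\<close> give \<open>|d(z, \<theta>) - d(x, \<theta>)| \<le> sqrt 2 M0 M1 b* \<zeta>(\<theta>)\<^sup>2\<close>.

  The suprema \<open>M0j\<close> and \<open>M1j\<close> are finite: by the identity theorem the \<open>\<gamma> j\<close> are
  \<open>2\<pi>\<close>-biperiodic on the whole strip, and their first and second partial derivatives are
  holomorphic (Cauchy's integral formula), hence bounded on a compact fundamental domain.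
\<close>

definition cpair :: "real \<times> real \<Rightarrow> complex \<times> complex" where
  "cpair p = (complex_of_real (fst p), complex_of_real (snd p))"

lemma cpair_add: "cpair (p + q) = cpair p + cpair q"
  by (simp add: cpair_def)

lemma cpair_scaleR: "cpair (t *\<^sub>R p) = t *\<^sub>R cpair p"
  by (simp add: cpair_def scaleR_conv_of_real)

lemma fst_cpair [simp]: "fst (cpair p) = complex_of_real (fst p)"
  and snd_cpair [simp]: "snd (cpair p) = complex_of_real (snd p)"
  by (simp_all add: cpair_def)

lemma add_cpair_eq: "z + cpair p = (fst z + complex_of_real (fst p), snd z + complex_of_real (snd p))"
  by (simp add: prod_eq_iff)

lemma ReZ_eq_cpair: "ReZ z = cpair (Re (fst z), Re (snd z))"
  by (simp add: ReZ_def cpair_def)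

lemma strip2_add_cpair: "w \<in> strip2 R \<Longrightarrow> w + cpair p \<in> strip2 R"
  by (simp add: strip2_def cpair_def)

lemma ReZ_in_strip2: "z \<in> strip2 R \<Longrightarrow> ReZ z \<in> strip2 R"
  by (auto simp: strip2_def ReZ_def)

lemma open_strip2: "open (strip2 R)"
  unfolding strip2_def by (intro open_Collect_conj open_Collect_less continuous_intros)

section \<open>Holomorphic functions of two variables\<close>

lemma holo2_on_derivatives:
  assumes "holo2_on f U" "z \<in> U"
  shows "((\<lambda>u. f (u, snd z)) has_field_derivative pd0 f z) (at (fst z))"
    and "((\<lambda>v. f (fst z, v)) has_field_derivative pd1 f z) (at (snd z))"
    and "(f has_derivative (\<lambda>w. pd0 f z * fst w + pd1 f z * snd w)) (at z)"
proof -
  obtain a b where ab: "(f has_derivative (\<lambda>w. a * fst w + b * snd w)) (at (fst z, snd z))"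
    using assms unfolding holo2_on_def by auto
  have "((\<lambda>u. (u, snd z)) has_derivative (\<lambda>h. (h, 0))) (at (fst z))"
    by (auto intro!: derivative_eq_intros)
  from diff_chain_at[OF this ab]
  have A: "((\<lambda>u. f (u, snd z)) has_field_derivative a) (at (fst z))"
    by (simp add: o_def has_field_derivative_def mult_commute_abs)
  have "((\<lambda>v. (fst z, v)) has_derivative (\<lambda>h. (0, h))) (at (snd z))"
    by (auto intro!: derivative_eq_intros)
  from diff_chain_at[OF this ab]
  have B: "((\<lambda>v. f (fst z, v)) has_field_derivative b) (at (snd z))"
    by (simp add: o_def has_field_derivative_def mult_commute_abs)
  have "pd0 f z = a" "pd1 f z = b"
    unfolding pd0_def pd1_def using A B by (auto intro: DERIV_imp_deriv)
  then show "((\<lambda>u. f (u, snd z)) has_field_derivative pd0 f z) (at (fst z))"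
    "((\<lambda>v. f (fst z, v)) has_field_derivative pd1 f z) (at (snd z))"
    "(f has_derivative (\<lambda>w. pd0 f z * fst w + pd1 f z * snd w)) (at z)"
    using A B ab by auto
qed

lemma holo2_on_imp_continuous_on: "holo2_on f U \<Longrightarrow> continuous_on U f"
  by (meson continuous_at_imp_continuous_on has_derivative_continuous holo2_on_def)

lemma holo2_on_subset: "holo2_on f U \<Longrightarrow> S \<subseteq> U \<Longrightarrow> holo2_on f S"
  unfolding holo2_on_def by blast

lemma holo2_on_compose_swap:
  assumes "holo2_on f U"
  shows "holo2_on (f \<circ> prod.swap) (prod.swap -` U)"
  unfolding holo2_on_def
proof
  fix z assume "z \<in> prod.swap -` U"
  then obtain a b where ab: "(f has_derivative (\<lambda>w. a * fst w + b * snd w)) (at (prod.swap z))"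
    using assms unfolding holo2_on_def by auto
  have "(prod.swap has_derivative prod.swap) (at z)"
    unfolding prod.swap_def by (auto intro!: derivative_eq_intros)
  from diff_chain_at[OF this ab]
  have "(f \<circ> prod.swap has_derivative (\<lambda>w. b * fst w + a * snd w)) (at z)"
    by (simp add: o_def add.commute)
  then show "\<exists>a b. (f \<circ> prod.swap has_derivative (\<lambda>w. a * fst w + b * snd w)) (at z)"
    by blast
qed

lemma pd1_eq_pd0_swap: "pd1 f = pd0 (f \<circ> prod.swap) \<circ> prod.swap"
  by (simp add: fun_eq_iff pd0_def pd1_def)

lemma open_swap_vimage: "open U \<Longrightarrow> open (prod.swap -` (U::('a::topological_space \<times> 'b::topological_space) set))"
  using open_vimage continuous_on_swap by blast

lemma holo2_on_shift:
  assumes "holo2_on f U" "\<And>w. w \<in> S \<Longrightarrow> w + c \<in> U"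
  shows "holo2_on (\<lambda>w. f (w + c)) S"
  unfolding holo2_on_def
proof
  fix w assume "w \<in> S"
  then obtain a b where ab: "(f has_derivative (\<lambda>w. a * fst w + b * snd w)) (at (w + c))"
    using assms unfolding holo2_on_def by blast
  have "((\<lambda>w. w + c) has_derivative (\<lambda>h. h)) (at w)"
    by (auto intro!: derivative_eq_intros)
  from diff_chain_at[OF this ab]
  show "\<exists>a b. ((\<lambda>w. f (w + c)) has_derivative (\<lambda>w. a * fst w + b * snd w)) (at w)"
    by (auto simp: o_def)
qed

lemma holo2_on_diff:
  assumes "holo2_on f S" "holo2_on g S"
  shows "holo2_on (\<lambda>w. f w - g w) S"
  unfolding holo2_on_def
proof
  fix w assume "w \<in> S"
  then obtain a b a' b' where
    "(f has_derivative (\<lambda>w. a * fst w + b * snd w)) (at w)"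
    "(g has_derivative (\<lambda>w. a' * fst w + b' * snd w)) (at w)"
    using assms unfolding holo2_on_def by meson
  from has_derivative_diff[OF this]
  have "((\<lambda>w. f w - g w) has_derivative (\<lambda>w. (a - a') * fst w + (b - b') * snd w)) (at w)"
    by (simp add: algebra_simps)
  then show "\<exists>a b. ((\<lambda>w. f w - g w) has_derivative (\<lambda>w. a * fst w + b * snd w)) (at w)"
    by blast
qed

lemma holo2_on_holomorphic_fst:
  assumes "holo2_on f U" "\<And>u. u \<in> S \<Longrightarrow> (u, v) \<in> U"
  shows "(\<lambda>u. f (u, v)) holomorphic_on S"
  using holo2_on_derivatives(1)[OF assms(1) assms(2)]
  by (auto simp: holomorphic_on_def field_differentiable_def intro: has_field_derivative_at_within)

lemma holo2_on_holomorphic_snd: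
  assumes "holo2_on f U" "\<And>v. v \<in> S \<Longrightarrow> (u, v) \<in> U"
  shows "(\<lambda>v. f (u, v)) holomorphic_on S"
  using holo2_on_derivatives(2)[OF assms(1) assms(2)]
  by (auto simp: holomorphic_on_def field_differentiable_def intro: has_field_derivative_at_within)

lemma open_contains_cball_Times:
  assumes "open U" "p \<in> U"
  obtains r where "r > 0" "cball (fst p) r \<times> cball (snd p) r \<subseteq> U"
proof -
  obtain A B where "open A" "open B" "p \<in> A \<times> B" "A \<times> B \<subseteq> U"
    using open_prod_elim[OF assms] .
  moreover obtain ra rb where "ra > 0" "cball (fst p) ra \<subseteq> A" "rb > 0" "cball (snd p) rb \<subseteq> B"
    using calculation open_contains_cball by (metis mem_Times_iff)
  ultimately show ?thesis
    using that[of "min ra rb"] by fastforce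
qed

text \<open>
  Cauchy's formula writes \<open>pd0 f\<close> as an integral over the parameter interval of a circle, which
  makes it continuous and differentiable in the second variable under the integral sign; together
  with holomorphy in the first variable, \<open>has_derivative_partialsI\<close> then shows that \<open>pd0 f\<close> is
  holomorphic.
\<close>

definition cauchy_kernel ::
    "(complex \<times> complex \<Rightarrow> complex) \<Rightarrow> complex \<Rightarrow> real \<Rightarrow> complex \<times> complex \<Rightarrow> real \<Rightarrow> complex" where
  "cauchy_kernel g a r w t =
     g (circlepath a r t, snd w) * vector_derivative (circlepath a r) (at t) / (circlepath a r t - fst w)\<^sup>2"

definition cauchy_pd0 :: "(complex \<times> complex \<Rightarrow> complex) \<Rightarrow> complex \<Rightarrow> real \<Rightarrow> complex \<times> complex \<Rightarrow> complex" where
  "cauchy_pd0 g a r w = contour_integral (circlepath a r) (\<lambda>u. g (u, snd w) / (u - fst w)\<^sup>2) / (2 * pi * \<i>)"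

lemma cauchy_pd0_eq_integral: "cauchy_pd0 g a r w = integral {0..1} (cauchy_kernel g a r w) / (2 * pi * \<i>)"
  by (simp add: cauchy_pd0_def cauchy_kernel_def[abs_def] contour_integral_integral)

lemma pd0_eq_cauchy_pd0:
  assumes f: "holo2_on f U" and U: "\<And>u. u \<in> cball a r \<Longrightarrow> (u, snd w) \<in> U" and w: "fst w \<in> ball a r"
  shows "pd0 f w = cauchy_pd0 f a r w"
proof -
  have "continuous_on (cball a r) (\<lambda>u. f (u, snd w))"
    using U by (intro continuous_on_compose2[OF holo2_on_imp_continuous_on[OF f]]) (auto intro!: continuous_intros)
  moreover have "(\<lambda>u. f (u, snd w)) holomorphic_on ball a r"
    using U by (intro holo2_on_holomorphic_fst[OF f]) auto
  ultimately show ?thesis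
    using DERIV_imp_deriv[OF Cauchy_derivative_integral_circlepath(2)[OF _ _ w]]
    by (simp add: pd0_def cauchy_pd0_def)
qed

lemma circlepath_in_sphere: "r \<ge> 0 \<Longrightarrow> circlepath a r t \<in> sphere a r"
  by (simp add: circlepath dist_norm norm_mult)

lemma continuous_on_cauchy_kernel:
  assumes g: "continuous_on U g" and r: "r > 0" and U: "sphere a r \<times> B \<subseteq> U" and A: "A \<subseteq> ball a r"
  shows "continuous_on ((A \<times> B) \<times> UNIV) (\<lambda>(w, t). cauchy_kernel g a r w t)"
proof -
  have "continuous_on ((A \<times> B) \<times> UNIV) (\<lambda>x. g (circlepath a r (snd x), snd (fst x)))"
    using circlepath_in_sphere[of r a] r U
    by (intro continuous_on_compose2[OF g]) (auto simp: circlepath intro!: continuous_intros)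
  moreover have "circlepath a r t \<noteq> x" if "x \<in> A" for x t
    using circlepath_in_sphere[of r a t] r A that by auto
  ultimately show ?thesis
    unfolding cauchy_kernel_def vector_derivative_circlepath case_prod_beta
    by (auto simp: circlepath intro!: continuous_intros)
qed

lemma continuous_on_cauchy_pd0:
  assumes "continuous_on U g" "r > 0" "sphere a r \<times> B \<subseteq> U" "A \<subseteq> ball a r"
  shows "continuous_on (A \<times> B) (cauchy_pd0 g a r)"
proof -
  have "continuous_on ((A \<times> B) \<times> cbox 0 1) (\<lambda>(w, t). cauchy_kernel g a r w t)"
    using continuous_on_cauchy_kernel[OF assms] by (rule continuous_on_subset) auto
  then have "continuous_on (A \<times> B) (\<lambda>w. integral (cbox 0 1) (cauchy_kernel g a r w))"
    by (rule integral_continuous_on_param)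
  then show ?thesis
    unfolding cauchy_pd0_eq_integral by (auto intro!: continuous_intros)
qed

lemma has_field_derivative_cauchy_pd0_snd:
  assumes f: "holo2_on f U" and c: "continuous_on U (pd1 f)" and r: "r > 0"
    and U: "sphere a r \<times> B \<subseteq> U" and B: "convex B" "open B" and x: "x \<in> ball a r" and y: "y \<in> B"
  shows "((\<lambda>v. cauchy_pd0 f a r (x, v)) has_field_derivative cauchy_pd0 (pd1 f) a r (x, y)) (at y)"
proof -
  have d: "((\<lambda>v. cauchy_kernel f a r (x, v) t) has_field_derivative cauchy_kernel (pd1 f) a r (x, v) t)
      (at v within B)" if "v \<in> B" for v t
  proof -
    have "(circlepath a r t, v) \<in> U"
      using U circlepath_in_sphere[of r a t] r that by auto
    from holo2_on_derivatives(2)[OF f this] show ?thesis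
      unfolding cauchy_kernel_def
      by (auto intro!: has_field_derivative_at_within DERIV_cmult_right DERIV_cdivide)
  qed
  have ck: "continuous_on (({x} \<times> B) \<times> UNIV) (\<lambda>(w, t). cauchy_kernel f a r w t)"
    "continuous_on (({x} \<times> B) \<times> UNIV) (\<lambda>(w, t). cauchy_kernel (pd1 f) a r w t)"
    using x by (auto intro!: continuous_on_cauchy_kernel[OF _ r U] holo2_on_imp_continuous_on[OF f] c)
  have "continuous_on (cbox 0 1) (\<lambda>t. (\<lambda>(w, t). cauchy_kernel f a r w t) ((x, v), t))" if "v \<in> B" for v
    by (rule continuous_on_compose2[OF ck(1)]) (use that in \<open>auto intro!: continuous_intros\<close>)
  then have cont_t: "continuous_on (cbox 0 1) (cauchy_kernel f a r (x, v))" if "v \<in> B" for v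
    using that by simp
  have "continuous_on (B \<times> cbox 0 1) (\<lambda>p. (\<lambda>(w, t). cauchy_kernel (pd1 f) a r w t) ((x, fst p), snd p))"
    by (rule continuous_on_compose2[OF ck(2)]) (auto intro!: continuous_intros)
  then have cont_vt: "continuous_on (B \<times> cbox 0 1) (\<lambda>(v, t). cauchy_kernel (pd1 f) a r (x, v) t)"
    by (simp add: case_prod_beta')
  from leibniz_rule_field_derivative[OF d integrable_continuous[OF cont_t] cont_vt y B(1)] y
  have "((\<lambda>v. integral (cbox 0 1) (cauchy_kernel f a r (x, v))) has_field_derivative
      integral (cbox 0 1) (cauchy_kernel (pd1 f) a r (x, y))) (at y)"
    using at_within_open[OF y B(2)] by auto
  then show ?thesis
    unfolding cauchy_pd0_eq_integral by (auto intro!: DERIV_cdivide)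
qed

lemma holo2_on_continuous_on_pd0:
  assumes f: "holo2_on f U" and U: "open U"
  shows "continuous_on U (pd0 f)"
proof (rule continuous_at_imp_continuous_on, rule ballI)
  fix p assume "p \<in> U"
  then obtain r where r: "r > 0" "cball (fst p) r \<times> cball (snd p) r \<subseteq> U"
    using open_contains_cball_Times[OF U] by blast
  define D where "D = ball (fst p) r \<times> ball (snd p) r"
  have D: "open D" "p \<in> D"
    using r by (auto simp: D_def open_Times mem_Times_iff)
  have "continuous_on D (cauchy_pd0 f (fst p) r)"
    unfolding D_def using r sphere_cball
    by (intro continuous_on_cauchy_pd0[OF holo2_on_imp_continuous_on[OF f]]) auto
  moreover have "cauchy_pd0 f (fst p) r w = pd0 f w" if "w \<in> D" for w
    using that r by (intro pd0_eq_cauchy_pd0[OF f, symmetric]) (auto simp: D_def)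
  ultimately have "continuous_on D (pd0 f)"
    by (rule continuous_on_eq)
  then show "isCont (pd0 f) p"
    using D continuous_on_eq_continuous_at by blast
qed

lemma holo2_on_continuous_on_pd1:
  assumes "holo2_on f U" "open U"
  shows "continuous_on U (pd1 f)"
proof -
  have "continuous_on (prod.swap -` U) (pd0 (f \<circ> prod.swap))"
    by (intro holo2_on_continuous_on_pd0 holo2_on_compose_swap open_swap_vimage assms)
  then have "continuous_on (prod.swap ` U) (pd0 (f \<circ> prod.swap))"
    by (rule continuous_on_subset) auto
  then show ?thesis
    unfolding pd1_eq_pd0_swap by (intro continuous_on_compose continuous_on_swap)
qed

lemma has_field_derivative_pd0_snd_cauchy:
  assumes f: "holo2_on f U" and U: "open U" and r: "r > 0" "cball a r \<times> cball b r \<subseteq> U"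
    and x: "x \<in> ball a r" and y: "y \<in> ball b r"
  shows "((\<lambda>v. pd0 f (x, v)) has_field_derivative cauchy_pd0 (pd1 f) a r (x, y)) (at y)"
proof (rule has_field_derivative_transform_within_open[OF _ open_ball y])
  have "sphere a r \<times> ball b r \<subseteq> cball a r \<times> cball b r"
    by (intro Sigma_mono sphere_cball ball_subset_cball)
  with r(2) have "sphere a r \<times> ball b r \<subseteq> U"
    by blast
  from has_field_derivative_cauchy_pd0_snd[OF f holo2_on_continuous_on_pd1[OF f U] r(1) this
      convex_ball open_ball x y]
  show "((\<lambda>v. cauchy_pd0 f a r (x, v)) has_field_derivative cauchy_pd0 (pd1 f) a r (x, y)) (at y)" .
  show "cauchy_pd0 f a r (x, v) = pd0 f (x, v)" if "v \<in> ball b r" for v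
    using r x that by (intro pd0_eq_cauchy_pd0[OF f, symmetric]) auto
qed

lemma pd1_pd0_eq_cauchy_pd0:
  assumes "holo2_on f U" "open U" "r > 0" "cball a r \<times> cball b r \<subseteq> U" "w \<in> ball a r \<times> ball b r"
  shows "pd1 (pd0 f) w = cauchy_pd0 (pd1 f) a r w"
  using DERIV_imp_deriv[OF has_field_derivative_pd0_snd_cauchy[OF assms(1-4), of "fst w" "snd w"]] assms(5)
  by (auto simp: pd1_def mem_Times_iff)

lemma holo2_on_has_field_derivative_pd0_snd:
  assumes f: "holo2_on f U" and U: "open U" and p: "p \<in> U"
  shows "((\<lambda>v. pd0 f (fst p, v)) has_field_derivative pd1 (pd0 f) p) (at (snd p))"
proof -
  obtain r where r: "r > 0" "cball (fst p) r \<times> cball (snd p) r \<subseteq> U"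
    using open_contains_cball_Times[OF U p] by blast
  then have "((\<lambda>v. pd0 f (fst p, v)) has_field_derivative cauchy_pd0 (pd1 f) (fst p) r (fst p, snd p))
      (at (snd p))"
    by (intro has_field_derivative_pd0_snd_cauchy[OF f U r]) auto
  moreover have "p \<in> ball (fst p) r \<times> ball (snd p) r"
    using r by (simp add: mem_Times_iff)
  ultimately show ?thesis
    using pd1_pd0_eq_cauchy_pd0[OF f U r] by simp
qed

lemma holo2_on_continuous_on_pd1_pd0:
  assumes f: "holo2_on f U" and U: "open U"
  shows "continuous_on U (pd1 (pd0 f))"
proof (rule continuous_at_imp_continuous_on, rule ballI)
  fix p assume "p \<in> U"
  then obtain r where r: "r > 0" "cball (fst p) r \<times> cball (snd p) r \<subseteq> U"
    using open_contains_cball_Times[OF U] by blast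
  define D where "D = ball (fst p) r \<times> ball (snd p) r"
  have D: "open D" "p \<in> D"
    using r by (auto simp: D_def open_Times mem_Times_iff)
  have "continuous_on D (cauchy_pd0 (pd1 f) (fst p) r)"
    unfolding D_def using r sphere_cball holo2_on_continuous_on_pd1[OF f U]
    by (intro continuous_on_cauchy_pd0) auto
  moreover have "cauchy_pd0 (pd1 f) (fst p) r w = pd1 (pd0 f) w" if "w \<in> D" for w
    using pd1_pd0_eq_cauchy_pd0[OF f U r] that by (simp add: D_def)
  ultimately have "continuous_on D (pd1 (pd0 f))"
    by (rule continuous_on_eq)
  then show "isCont (pd1 (pd0 f)) p"
    using D continuous_on_eq_continuous_at by blast
qed

lemma holomorphic_on_pd0_fst:
  assumes "holo2_on f U" "open X" "\<And>u. u \<in> X \<Longrightarrow> (u, v) \<in> U"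
  shows "(\<lambda>u. pd0 f (u, v)) holomorphic_on X"
  using holomorphic_deriv[OF holo2_on_holomorphic_fst[OF assms(1,3)] assms(2)] by (simp add: pd0_def)

lemma holo2_on_pd0:
  assumes f: "holo2_on f U" and U: "open U"
  shows "holo2_on (pd0 f) U"
  unfolding holo2_on_def
proof
  fix p assume "p \<in> U"
  then obtain r where r: "r > 0" "cball (fst p) r \<times> cball (snd p) r \<subseteq> U"
    using open_contains_cball_Times[OF U] by blast
  define X Y where "X = ball (fst p) r" and "Y = ball (snd p) r"
  have XY: "open X" "convex Y" "fst p \<in> X" "snd p \<in> Y" "p \<in> X \<times> Y" "X \<times> Y \<subseteq> U"
    using r by (auto simp: X_def Y_def mem_Times_iff)
  have "(\<lambda>u. pd0 f (u, snd p)) holomorphic_on X"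
    using XY by (intro holomorphic_on_pd0_fst[OF f XY(1)]) (auto simp: mem_Times_iff)
  then have "(\<lambda>u. pd0 f (u, snd p)) field_differentiable (at (fst p))"
    using XY(1,3) by (rule holomorphic_on_imp_differentiable_at)
  then have fx: "((\<lambda>u. pd0 f (u, snd p)) has_derivative (*) (pd0 (pd0 f) p)) (at (fst p) within X)"
    by (auto simp: field_differentiable_def has_field_derivative_def pd0_def[of "pd0 f"] DERIV_imp_deriv
        intro: has_derivative_at_withinI)
  have fy: "((\<lambda>v. pd0 f (x, v)) has_derivative blinfun_apply (blinfun_mult_right (pd1 (pd0 f) (x, y))))
      (at y within Y)" if "x \<in> X" "y \<in> Y" for x y
    using holo2_on_has_field_derivative_pd0_snd[OF f U, of "(x, y)"] that XY(6)
    by (auto simp: has_field_derivative_eq_has_derivative_blinfun intro: has_derivative_at_withinI)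
  have "continuous_on (X \<times> Y) (\<lambda>w. blinfun_mult_right (pd1 (pd0 f) w))"
    by (intro bounded_linear.continuous_on[OF bounded_linear_blinfun_mult_right]
        continuous_on_subset[OF holo2_on_continuous_on_pd1_pd0[OF f U] XY(6)])
  then have "continuous (at p within X \<times> Y) (\<lambda>w. blinfun_mult_right (pd1 (pd0 f) w))"
    using XY(5) unfolding continuous_on_eq_continuous_within by blast
  then have "continuous (at (fst p, snd p) within X \<times> Y) (\<lambda>(x, y). blinfun_mult_right (pd1 (pd0 f) (x, y)))"
    by (simp add: case_prod_beta')
  from has_derivative_partialsI[where f = "\<lambda>x y. pd0 f (x, y)", OF fx fy this XY(4,2)]
  have "((\<lambda>(x, y). pd0 f (x, y)) has_derivative
      (\<lambda>(tx, ty). pd0 (pd0 f) p * tx + blinfun_apply (blinfun_mult_right (pd1 (pd0 f) (fst p, snd p))) ty))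
      (at (fst p, snd p) within X \<times> Y)" .
  moreover have "at p within X \<times> Y = at p"
    using XY by (intro at_within_open) (auto simp: open_Times X_def Y_def)
  ultimately have "(pd0 f has_derivative (\<lambda>w. pd0 (pd0 f) p * fst w + pd1 (pd0 f) p * snd w)) (at p)"
    by (simp add: case_prod_beta')
  then show "\<exists>a b. (pd0 f has_derivative (\<lambda>w. a * fst w + b * snd w)) (at p)"
    by blast
qed

lemma holo2_on_pd1:
  assumes "holo2_on f U" "open U"
  shows "holo2_on (pd1 f) U"
proof -
  have "holo2_on (pd0 (f \<circ> prod.swap)) (prod.swap -` U)"
    by (intro holo2_on_pd0 holo2_on_compose_swap open_swap_vimage assms)
  from holo2_on_compose_swap[OF this] show ?thesis
    by (simp add: pd1_eq_pd0_swap vimage_comp)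
qed

section \<open>Periodicity in the strip\<close>

lemma zero_islimpt_Reals: "(0::complex) islimpt \<real>"
proof -
  have "(\<lambda>n. complex_of_real (inverse (Suc n))) \<longlonglongrightarrow> complex_of_real 0"
    by (intro tendsto_of_real LIMSEQ_inverse_real_of_nat)
  then show ?thesis
    unfolding islimpt_sequential
    by (intro exI[of _ "\<lambda>n. complex_of_real (inverse (Suc n))"]) (auto simp flip: of_nat_Suc)
qed

lemma holo2_on_strip2_eq_0:
  assumes h: "holo2_on h (strip2 R)" and real: "\<And>p. h (cpair p) = 0" and w: "w \<in> strip2 R"
  shows "h w = 0"
proof -
  define S where "S = {u::complex. \<bar>Im u\<bar> < R}"
  have strip: "strip2 R = S \<times> S"
    by (auto simp: strip2_def S_def)
  have S_eq: "S = {u. Im u < R} \<inter> {u. Im u > - R}"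
    by (auto simp: S_def)
  have "open S"
    unfolding S_eq by (intro open_Int open_halfspace_Im_lt open_halfspace_Im_gt)
  moreover have "connected S"
    unfolding S_eq by (intro convex_connected convex_Int convex_halfspace_Im_lt convex_halfspace_Im_gt)
  ultimately have S: "open S" "connected S" .
  have S': "\<real> \<subseteq> S" "0 \<in> S"
    using w by (auto simp: S_def strip2_def elim!: Reals_cases)
  have on_reals: "h (u, of_real y) = 0" if "u \<in> S" for u y
  proof (rule analytic_continuation[OF _ S S' zero_islimpt_Reals _ that])
    show "(\<lambda>u. h (u, of_real y)) holomorphic_on S"
      using S'(1) by (intro holo2_on_holomorphic_fst[OF h]) (auto simp: strip)
    show "h (x, of_real y) = 0" if "x \<in> \<real>" for x
      using that real[of "(Re x, y)"] by (auto simp: cpair_def elim!: Reals_cases)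
  qed
  have "h (u, v) = 0" if "u \<in> S" "v \<in> S" for u v
  proof (rule analytic_continuation[OF _ S S' zero_islimpt_Reals _ that(2)])
    show "(\<lambda>v. h (u, v)) holomorphic_on S"
      using that(1) by (intro holo2_on_holomorphic_snd[OF h]) (auto simp: strip)
    show "h (u, x) = 0" if "x \<in> \<real>" for x
      using that on_reals \<open>u \<in> S\<close> by (auto elim!: Reals_cases)
  qed
  then show ?thesis
    using w by (auto simp: strip)
qed

definition biperiodic :: "real \<Rightarrow> (complex \<times> complex \<Rightarrow> complex) \<Rightarrow> bool" where
  "biperiodic R g \<longleftrightarrow> (\<forall>w\<in>strip2 R. g (w + cpair (2*pi, 0)) = g w \<and> g (w + cpair (0, 2*pi)) = g w)"

lemma periodic_plus_of_int:
  fixes h :: "'a::ring_1 \<Rightarrow> 'b"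
  assumes "\<And>x. h (x + c) = h x"
  shows "h (x + of_int k * c) = h x"
proof -
  interpret periodic_fun_simple h c
    by standard (rule assms)
  show ?thesis
    by (rule plus_of_int)
qed

lemma biperiodic_plus_of_int:
  assumes g: "biperiodic R g" and w: "w \<in> strip2 R"
  shows "g (w + cpair (of_int k * (2*pi), of_int l * (2*pi))) = g w"
proof -
  have step0: "g (v + cpair (s + 2*pi, 0)) = g (v + cpair (s, 0))" if "v \<in> strip2 R" for v s
  proof -
    have "g (v + cpair (s, 0) + cpair (2*pi, 0)) = g (v + cpair (s, 0))"
      using g strip2_add_cpair[OF that] by (simp add: biperiodic_def)
    then show ?thesis
      by (simp add: add.assoc flip: cpair_add)
  qed
  have step1: "g (v + cpair (0, s + 2*pi)) = g (v + cpair (0, s))" if "v \<in> strip2 R" for v s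
  proof -
    have "g (v + cpair (0, s) + cpair (0, 2*pi)) = g (v + cpair (0, s))"
      using g strip2_add_cpair[OF that] by (simp add: biperiodic_def)
    then show ?thesis
      by (simp add: add.assoc flip: cpair_add)
  qed
  define w' where "w' = w + cpair (of_int k * (2*pi), 0)"
  have "g w' = g w"
    using periodic_plus_of_int[of "\<lambda>s. g (w + cpair (s, 0))", OF step0[OF w], of 0 k]
    by (simp add: w'_def cpair_def flip: zero_prod_def)
  moreover have "w' \<in> strip2 R"
    unfolding w'_def using w by (rule strip2_add_cpair)
  then have "g (w' + cpair (0, of_int l * (2*pi))) = g w'"
    using periodic_plus_of_int[of "\<lambda>s. g (w' + cpair (0, s))", OF step1, of 0 l]
    by (simp add: cpair_def flip: zero_prod_def)
  ultimately show ?thesis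
    by (simp add: w'_def add.assoc flip: cpair_add)
qed

lemma floor_divide_2pi_bounds:
  "0 \<le> x - of_int \<lfloor>x / (2*pi)\<rfloor> * (2*pi)" "x - of_int \<lfloor>x / (2*pi)\<rfloor> * (2*pi) < 2*pi"
  using floor_divide_lower[of "2*pi" x] floor_divide_upper[of "2*pi" x] by (auto simp: algebra_simps)

lemma biperiodic_bounded:
  assumes g: "continuous_on U g" and U: "cstrip2 R \<subseteq> U" and per: "biperiodic R g"
  obtains B where "\<And>w. w \<in> strip2 R \<Longrightarrow> norm (g w) \<le> B"
proof -
  define K where "K = cbox (Complex 0 (-R)) (Complex (2*pi) R) \<times> cbox (Complex 0 (-R)) (Complex (2*pi) R)"
  have "K \<subseteq> U"
    using U by (auto simp: K_def cstrip2_def cbox_complex_eq)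
  moreover have "compact K"
    unfolding K_def by (intro compact_Times compact_cbox)
  ultimately have "compact (g ` K)"
    by (intro compact_continuous_image continuous_on_subset[OF g])
  then obtain B where B: "\<And>v. v \<in> K \<Longrightarrow> norm (g v) \<le> B"
    using compact_imp_bounded bounded_iff by (metis image_eqI)
  have "norm (g w) \<le> B" if w: "w \<in> strip2 R" for w
  proof -
    define k l where "k = \<lfloor>Re (fst w) / (2*pi)\<rfloor>" and "l = \<lfloor>Re (snd w) / (2*pi)\<rfloor>"
    define v where "v = w + cpair (of_int (- k) * (2*pi), of_int (- l) * (2*pi))"
    have v: "v \<in> strip2 R"
      unfolding v_def using w by (rule strip2_add_cpair)
    then have "g w = g v"
      using biperiodic_plus_of_int[OF per v, of k l]
      by (simp add: v_def add.assoc cpair_def flip: cpair_add zero_prod_def)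
    moreover have "v \<in> K"
      using v floor_divide_2pi_bounds[of "Re (fst w)"] floor_divide_2pi_bounds[of "Re (snd w)"]
      by (auto simp: K_def v_def k_def l_def strip2_def cbox_complex_eq mem_Times_iff)
    ultimately show ?thesis
      using B by simp
  qed
  then show ?thesis
    using that by blast
qed

lemma pd0_translate:
  assumes "open S" "w \<in> S" "\<And>v. v \<in> S \<Longrightarrow> g (v + c) = g v"
  shows "pd0 g (w + c) = pd0 g w"
proof -
  have "open ((\<lambda>x. (fst w + x, snd w)) -` S)"
    using assms(1) by (intro open_vimage) (auto intro!: continuous_intros)
  then have "eventually (\<lambda>x. (fst w + x, snd w) \<in> S) (nhds 0)"
    using assms(2) eventually_nhds_in_open[of _ 0] by force
  then have "eventually (\<lambda>x. g (fst w + fst c + x, snd w + snd c) = g (fst w + x, snd w)) (nhds 0)"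
  proof eventually_elim
    case (elim x)
    show ?case
      using assms(3)[OF elim] by (simp add: plus_prod_def algebra_simps)
  qed
  then show ?thesis
    unfolding pd0_def deriv_shift_0[of _ "fst (w + c)"] deriv_shift_0[of _ "fst w"]
    by (intro deriv_cong_ev) (simp_all add: o_def)
qed

lemma pd1_translate:
  assumes "open S" "w \<in> S" "\<And>v. v \<in> S \<Longrightarrow> g (v + c) = g v"
  shows "pd1 g (w + c) = pd1 g w"
proof -
  have "open ((\<lambda>x. (fst w, snd w + x)) -` S)"
    using assms(1) by (intro open_vimage) (auto intro!: continuous_intros)
  then have "eventually (\<lambda>x. (fst w, snd w + x) \<in> S) (nhds 0)"
    using assms(2) eventually_nhds_in_open[of _ 0] by force
  then have "eventually (\<lambda>x. g (fst w + fst c, snd w + snd c + x) = g (fst w, snd w + x)) (nhds 0)"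
  proof eventually_elim
    case (elim x)
    show ?case
      using assms(3)[OF elim] by (simp add: plus_prod_def algebra_simps)
  qed
  then show ?thesis
    unfolding pd1_def deriv_shift_0[of _ "snd (w + c)"] deriv_shift_0[of _ "snd w"]
    by (intro deriv_cong_ev) (simp_all add: o_def)
qed

lemma biperiodic_pd:
  assumes "biperiodic R g"
  shows "biperiodic R (pd0 g)" "biperiodic R (pd1 g)"
  using assms unfolding biperiodic_def
  by (auto intro!: pd0_translate[OF open_strip2] pd1_translate[OF open_strip2])

lemma biperiodic_if_periodic_on_reals:
  assumes g: "holo2_on g (strip2 R)"
    and per0: "\<And>x y. g (complex_of_real (x + 2*pi), complex_of_real y) = g (complex_of_real x, complex_of_real y)"
    and per1: "\<And>x y. g (complex_of_real x, complex_of_real (y + 2*pi)) = g (complex_of_real x, complex_of_real y)"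
  shows "biperiodic R g"
proof -
  have "g (w + cpair c) - g w = 0" if "w \<in> strip2 R" "c \<in> {(2*pi, 0), (0, 2*pi)}" for w c
  proof (rule holo2_on_strip2_eq_0[OF _ _ that(1)])
    show "holo2_on (\<lambda>w. g (w + cpair c) - g w) (strip2 R)"
      by (intro holo2_on_diff holo2_on_shift[OF g] g strip2_add_cpair)
    show "g (cpair p + cpair c) - g (cpair p) = 0" for p
      using that(2) per0 per1 by (auto simp: cpair_def)
  qed
  then show ?thesis
    unfolding biperiodic_def by simp
qed

section \<open>The constants \<open>M0j\<close> and \<open>M1j\<close>\<close>

lemma norm_real_pair: "norm (t :: real \<times> real) = sqrt ((fst t)\<^sup>2 + (snd t)\<^sup>2)"
  by (simp add: norm_prod_def)

lemma sqrt_sum_cmod_mult: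
  "sqrt (\<Sum>i\<in>I. (cmod (c * f i))\<^sup>2) = cmod c * sqrt (\<Sum>i\<in>I. (cmod (f i))\<^sup>2)"
  by (simp add: norm_mult power_mult_distrib real_sqrt_mult flip: sum_distrib_left)

lemma opnorm2_image_bound:
  fixes A :: "nat \<Rightarrow> nat \<Rightarrow> complex"
  assumes "sqrt (\<Sum>j<n. (cmod (x j))\<^sup>2) \<le> 1"
  shows "sqrt (\<Sum>i<m. (cmod (\<Sum>j<n. A i j * x j))\<^sup>2) \<le> (\<Sum>i<m. \<Sum>j<n. cmod (A i j))"
proof -
  have "cmod (x j) \<le> 1" if "j < n" for j
  proof -
    have "(cmod (x j))\<^sup>2 \<le> (\<Sum>j<n. (cmod (x j))\<^sup>2)"
      using that by (intro member_le_sum) simp_all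
    also have "\<dots> \<le> 1"
      using assms by simp
    finally show ?thesis
      by (simp add: power_le_one_iff)
  qed
  then have row: "cmod (\<Sum>j<n. A i j * x j) \<le> (\<Sum>j<n. cmod (A i j))" for i
    by (intro order_trans[OF norm_sum] sum_mono) (auto simp: norm_mult intro!: mult_left_le)
  have "sqrt (\<Sum>i<m. (cmod (\<Sum>j<n. A i j * x j))\<^sup>2) \<le> (\<Sum>i<m. cmod (\<Sum>j<n. A i j * x j))"
    using L2_set_le_sum[of "{..<m}" "\<lambda>i. cmod (\<Sum>j<n. A i j * x j)"] by (simp add: L2_set_def)
  also have "\<dots> \<le> (\<Sum>i<m. \<Sum>j<n. cmod (A i j))"
    by (intro sum_mono row)
  finally show ?thesis .
qed

lemma bdd_above_opnorm2_set:
  fixes A :: "nat \<Rightarrow> nat \<Rightarrow> complex"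
  shows "bdd_above {sqrt (\<Sum>i<m. (cmod (\<Sum>j<n. A i j * x j))\<^sup>2) | x. sqrt (\<Sum>j<n. (cmod (x j))\<^sup>2) \<le> 1}"
  using opnorm2_image_bound by (intro bdd_aboveI) blast

lemma opnorm2_le_sum_norm: "opnorm2 A m n \<le> (\<Sum>i<m. \<Sum>j<n. cmod (A i j))"
  unfolding opnorm2_def
  by (rule cSup_least) (auto intro!: exI[of _ "\<lambda>_. 0"] opnorm2_image_bound)

lemma opnorm2_apply_le:
  fixes A :: "nat \<Rightarrow> nat \<Rightarrow> complex"
  shows "sqrt (\<Sum>i<m. (cmod (\<Sum>j<n. A i j * x j))\<^sup>2) \<le> opnorm2 A m n * sqrt (\<Sum>j<n. (cmod (x j))\<^sup>2)"
proof (cases "sqrt (\<Sum>j<n. (cmod (x j))\<^sup>2) = 0")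
  case True
  then have "x j = 0" if "j < n" for j
    using that by (simp add: sum_nonneg_eq_0_iff)
  then show ?thesis
    by simp
next
  case False
  define N where "N = sqrt (\<Sum>j<n. (cmod (x j))\<^sup>2)"
  have N: "N > 0"
    using False by (simp add: N_def less_le sum_nonneg)
  define y where "y j = complex_of_real (inverse N) * x j" for j
  have "sqrt (\<Sum>j<n. (cmod (y j))\<^sup>2) = 1"
    using N by (simp add: y_def sqrt_sum_cmod_mult norm_inverse flip: N_def)
  then have "sqrt (\<Sum>i<m. (cmod (\<Sum>j<n. A i j * y j))\<^sup>2) \<le> opnorm2 A m n"
    unfolding opnorm2_def by (intro cSup_upper bdd_above_opnorm2_set) auto
  moreover have "(\<Sum>j<n. A i j * y j) = complex_of_real (inverse N) * (\<Sum>j<n. A i j * x j)" for i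
    by (simp add: y_def sum_distrib_left algebra_simps)
  ultimately have "inverse N * sqrt (\<Sum>i<m. (cmod (\<Sum>j<n. A i j * x j))\<^sup>2) \<le> opnorm2 A m n"
    using N by (simp add: sqrt_sum_cmod_mult norm_inverse)
  then show ?thesis
    using N by (simp add: N_def field_simps)
qed

lemma cmod_real_combination_le:
  "cmod (u0 * complex_of_real (fst t) + u1 * complex_of_real (snd t))
     \<le> sqrt ((cmod u0)\<^sup>2 + (cmod u1)\<^sup>2) * norm t"
proof -
  have "cmod (u0 * complex_of_real (fst t) + u1 * complex_of_real (snd t))
      \<le> cmod u0 * \<bar>fst t\<bar> + cmod u1 * \<bar>snd t\<bar>"
    by (rule order_trans[OF norm_triangle_ineq]) (simp add: norm_mult)
  also have "\<dots> \<le> sqrt ((cmod u0)\<^sup>2 + (cmod u1)\<^sup>2) * sqrt ((fst t)\<^sup>2 + (snd t)\<^sup>2)"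
    using L2_set_mult_ineq[of "\<lambda>i. if i = 0 then cmod u0 else cmod u1" "\<lambda>i. if i = 0 then fst t else snd t" "{0, 1::nat}"]
    by (simp add: L2_set_def)
  finally show ?thesis
    by (simp add: norm_real_pair)
qed

lemma cmod_grad_apply_le:
  "cmod ((pd0 f w + pd0 f w') * complex_of_real (fst t) + (pd1 f w + pd1 f w') * complex_of_real (snd t))
     \<le> opnorm2 (\<lambda>i j. grad f w i j + grad f w' i j) 1 2 * norm t"
  using opnorm2_apply_le[where m = 1 and n = 2 and A = "\<lambda>i j. grad f w i j + grad f w' i j"
      and x = "\<lambda>j. if j = 0 then complex_of_real (fst t) else complex_of_real (snd t)"]
  by (simp add: numeral_2_eq_2 grad_def norm_real_pair power2_eq_square)

lemma norm_hess_apply_le: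
  "sqrt ((cmod (hess f w 0 0 * u0 + hess f w 0 1 * u1))\<^sup>2 + (cmod (hess f w 1 0 * u0 + hess f w 1 1 * u1))\<^sup>2)
     \<le> opnorm2 (hess f w) 2 2 * sqrt ((cmod u0)\<^sup>2 + (cmod u1)\<^sup>2)"
  using opnorm2_apply_le[where m = 2 and n = 2 and A = "hess f w" and x = "\<lambda>j. if j = 0 then u0 else u1"]
  by (simp add: numeral_2_eq_2)

lemma strip2_subset_cstrip2: "strip2 R \<subseteq> cstrip2 R"
  by (auto simp: strip2_def cstrip2_def)

lemma analytic2_on_cstrip_imp_holo2_on: "analytic2_on_cstrip f R \<Longrightarrow> holo2_on f (strip2 R)"
  unfolding analytic2_on_cstrip_def using strip2_subset_cstrip2 holo2_on_subset by blast

lemma analytic2_on_cstrip_pd: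
  assumes "analytic2_on_cstrip f R"
  shows "analytic2_on_cstrip (pd0 f) R" "analytic2_on_cstrip (pd1 f) R"
  using assms holo2_on_pd0 holo2_on_pd1 unfolding analytic2_on_cstrip_def by blast+

lemma analytic2_biperiodic_bounded:
  assumes "analytic2_on_cstrip f R" "biperiodic R f"
  obtains B where "\<And>w. w \<in> strip2 R \<Longrightarrow> cmod (f w) \<le> B"
  using assms biperiodic_bounded holo2_on_imp_continuous_on unfolding analytic2_on_cstrip_def by metis

lemma opnorm2_grad_le_M0j:
  assumes f: "analytic2_on_cstrip f R" "biperiodic R f" and w: "w \<in> strip2 R"
  shows "opnorm2 (\<lambda>i j. grad f w i j + grad f (ReZ w) i j) 1 2 \<le> M0j f R"
proof -
  obtain B0 where B0: "\<And>w. w \<in> strip2 R \<Longrightarrow> cmod (pd0 f w) \<le> B0"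
    using analytic2_biperiodic_bounded[OF analytic2_on_cstrip_pd(1) biperiodic_pd(1)] f by blast
  obtain B1 where B1: "\<And>w. w \<in> strip2 R \<Longrightarrow> cmod (pd1 f w) \<le> B1"
    using analytic2_biperiodic_bounded[OF analytic2_on_cstrip_pd(2) biperiodic_pd(2)] f by blast
  have bound: "opnorm2 (\<lambda>i j. grad f v i j + grad f (ReZ v) i j) 1 2 \<le> (B0 + B0) + (B1 + B1)"
    if v: "v \<in> strip2 R" for v
  proof -
    have "opnorm2 (\<lambda>i j. grad f v i j + grad f (ReZ v) i j) 1 2
        \<le> cmod (pd0 f v + pd0 f (ReZ v)) + cmod (pd1 f v + pd1 f (ReZ v))"
      using opnorm2_le_sum_norm[where A = "\<lambda>i j. grad f v i j + grad f (ReZ v) i j" and m = 1 and n = 2]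
      by (simp add: numeral_2_eq_2 grad_def)
    also have "\<dots> \<le> (B0 + B0) + (B1 + B1)"
      using v ReZ_in_strip2[OF v]
      by (intro add_mono order_trans[OF norm_triangle_ineq] B0 B1)
    finally show ?thesis .
  qed
  show ?thesis
    unfolding M0j_def by (rule cSUP_upper[OF w bdd_aboveI2[OF bound]])
qed

lemma opnorm2_hess_le_M1j:
  assumes f: "analytic2_on_cstrip f R" "biperiodic R f" and w: "w \<in> strip2 R"
  shows "opnorm2 (hess f w) 2 2 \<le> M1j f R"
proof -
  have an: "analytic2_on_cstrip (pd0 (pd0 f)) R" "analytic2_on_cstrip (pd1 (pd0 f)) R"
    "analytic2_on_cstrip (pd0 (pd1 f)) R" "analytic2_on_cstrip (pd1 (pd1 f)) R"
    using analytic2_on_cstrip_pd[OF analytic2_on_cstrip_pd(1)[OF f(1)]]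
      analytic2_on_cstrip_pd[OF analytic2_on_cstrip_pd(2)[OF f(1)]] by auto
  have per: "biperiodic R (pd0 (pd0 f))" "biperiodic R (pd1 (pd0 f))"
    "biperiodic R (pd0 (pd1 f))" "biperiodic R (pd1 (pd1 f))"
    using biperiodic_pd[OF biperiodic_pd(1)[OF f(2)]] biperiodic_pd[OF biperiodic_pd(2)[OF f(2)]] by auto
  obtain B00 where B00: "\<And>w. w \<in> strip2 R \<Longrightarrow> cmod (pd0 (pd0 f) w) \<le> B00"
    using analytic2_biperiodic_bounded[OF an(1) per(1)] by blast
  obtain B01 where B01: "\<And>w. w \<in> strip2 R \<Longrightarrow> cmod (pd1 (pd0 f) w) \<le> B01"
    using analytic2_biperiodic_bounded[OF an(2) per(2)] by blast
  obtain B10 where B10: "\<And>w. w \<in> strip2 R \<Longrightarrow> cmod (pd0 (pd1 f) w) \<le> B10"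
    using analytic2_biperiodic_bounded[OF an(3) per(3)] by blast
  obtain B11 where B11: "\<And>w. w \<in> strip2 R \<Longrightarrow> cmod (pd1 (pd1 f) w) \<le> B11"
    using analytic2_biperiodic_bounded[OF an(4) per(4)] by blast
  have bound: "opnorm2 (hess f v) 2 2 \<le> (B00 + B01) + (B10 + B11)" if v: "v \<in> strip2 R" for v
  proof -
    have "opnorm2 (hess f v) 2 2
        \<le> (cmod (pd0 (pd0 f) v) + cmod (pd1 (pd0 f) v)) + (cmod (pd0 (pd1 f) v) + cmod (pd1 (pd1 f) v))"
      using opnorm2_le_sum_norm[where A = "hess f v" and m = 2 and n = 2]
      by (simp add: numeral_2_eq_2 hess_def)
    also have "\<dots> \<le> (B00 + B01) + (B10 + B11)"
      using v by (intro add_mono B00 B01 B10 B11)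
    finally show ?thesis .
  qed
  show ?thesis
    unfolding M1j_def by (rule cSUP_upper[OF w bdd_aboveI2[OF bound]])
qed

section \<open>Mean value estimates\<close>

lemma holo2_on_has_vector_derivative_line:
  assumes "holo2_on f S" "a + t *\<^sub>R v \<in> S"
  shows "((\<lambda>t. f (a + t *\<^sub>R v)) has_vector_derivative
           pd0 f (a + t *\<^sub>R v) * fst v + pd1 f (a + t *\<^sub>R v) * snd v) (at t)"
proof -
  have "((\<lambda>t. a + t *\<^sub>R v) has_derivative (\<lambda>h. h *\<^sub>R v)) (at t)"
    by (auto intro!: derivative_eq_intros)
  from diff_chain_at[OF this holo2_on_derivatives(3)[OF assms]] show ?thesis
    by (simp add: has_vector_derivative_def o_def scaleR_conv_of_real algebra_simps)
qed

lemma norm_diff_le_vector_derivative_bound: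
  fixes \<phi> :: "real \<Rightarrow> 'a::real_normed_vector"
  assumes "\<And>t. t \<in> {0..1} \<Longrightarrow> (\<phi> has_vector_derivative \<phi>' t) (at t)"
    and "\<And>t. t \<in> {0..1} \<Longrightarrow> norm (\<phi>' t) \<le> B"
  shows "norm (\<phi> 1 - \<phi> 0) \<le> B"
proof -
  have "norm (\<phi> 1 - \<phi> 0) \<le> B * norm (1 - 0::real)"
  proof (rule differentiable_bound[where f' = "\<lambda>t h. h *\<^sub>R \<phi>' t"])
    show "(\<phi> has_derivative (\<lambda>h. h *\<^sub>R \<phi>' t)) (at t within {0..1})" if "t \<in> {0..1}" for t
      using assms(1)[OF that] unfolding has_vector_derivative_def by (rule has_derivative_at_withinI)
    show "onorm (\<lambda>h. h *\<^sub>R \<phi>' t) \<le> B" if "t \<in> {0..1}" for t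
    proof (rule onorm_le)
      fix h :: real
      have "norm (h *\<^sub>R \<phi>' t) = \<bar>h\<bar> * norm (\<phi>' t)"
        by simp
      also have "\<dots> \<le> \<bar>h\<bar> * B"
        using assms(2)[OF that] by (rule mult_left_mono) simp
      finally show "norm (h *\<^sub>R \<phi>' t) \<le> B * norm h"
        by (simp add: mult.commute)
    qed
  qed auto
  then show ?thesis
    by simp
qed

lemma strip2_add_scaleR_cpair: "z \<in> strip2 R \<Longrightarrow> z + s *\<^sub>R cpair t \<in> strip2 R"
  by (simp add: strip2_add_cpair flip: cpair_scaleR)

lemma ReZ_add_scaleR_cpair: "ReZ (z + s *\<^sub>R cpair t) = ReZ z + s *\<^sub>R cpair t"
  by (simp add: ReZ_def cpair_def scaleR_conv_of_real)

lemma shift_diff_add_Re_bound: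
  assumes f: "holo2_on f (strip2 R)"
    and M: "\<And>w. w \<in> strip2 R \<Longrightarrow> opnorm2 (\<lambda>i j. grad f w i j + grad f (ReZ w) i j) 1 2 \<le> M"
    and z: "z \<in> strip2 R"
  shows "cmod ((f z - f (z + cpair t)) + (f (ReZ z) - f (ReZ z + cpair t))) \<le> M * norm t"
proof -
  define \<phi> where "\<phi> = (\<lambda>s::real. f (z + s *\<^sub>R cpair t) + f (ReZ z + s *\<^sub>R cpair t))"
  define \<phi>' where "\<phi>' s = (pd0 f (z + s *\<^sub>R cpair t) + pd0 f (ReZ (z + s *\<^sub>R cpair t))) * of_real (fst t)
      + (pd1 f (z + s *\<^sub>R cpair t) + pd1 f (ReZ (z + s *\<^sub>R cpair t))) * of_real (snd t)" for s :: real
  have line: "z + s *\<^sub>R cpair t \<in> strip2 R" "ReZ z + s *\<^sub>R cpair t \<in> strip2 R" for s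
    using z ReZ_in_strip2[OF z] by (simp_all add: strip2_add_scaleR_cpair)
  have "(\<phi> has_vector_derivative \<phi>' s) (at s)" for s
    using has_vector_derivative_add[OF holo2_on_has_vector_derivative_line[OF f line(1)]
        holo2_on_has_vector_derivative_line[OF f line(2)]]
    by (simp add: \<phi>_def \<phi>'_def ReZ_add_scaleR_cpair algebra_simps)
  moreover have "norm (\<phi>' s) \<le> M * norm t" for s
    unfolding \<phi>'_def using M[OF line(1)]
    by (intro order_trans[OF cmod_grad_apply_le] mult_right_mono) simp_all
  ultimately have "norm (\<phi> 1 - \<phi> 0) \<le> M * norm t"
    by (rule norm_diff_le_vector_derivative_bound)
  then show ?thesis
    by (simp add: \<phi>_def norm_minus_commute algebra_simps)
qed

lemma directional_pd_Re_bound: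
  assumes f: "holo2_on (pd0 f) (strip2 R)" "holo2_on (pd1 f) (strip2 R)"
    and M: "\<And>w. w \<in> strip2 R \<Longrightarrow> opnorm2 (hess f w) 2 2 \<le> M"
    and w: "w \<in> strip2 R"
  shows "cmod ((pd0 f w * of_real (fst t) + pd1 f w * of_real (snd t))
      - (pd0 f (ReZ w) * of_real (fst t) + pd1 f (ReZ w) * of_real (snd t)))
      \<le> M * norm (Im (fst w), Im (snd w)) * norm t"
proof -
  define G where "G v = pd0 f v * of_real (fst t) + pd1 f v * of_real (snd t)" for v
  \<comment> \<open>\<open>ReZ w + \<iota> = w\<close>; the Hessian bounds the change of \<open>G\<close> along the segment between them.\<close>
  define \<iota> where "\<iota> = (\<i> * of_real (Im (fst w)), \<i> * of_real (Im (snd w)))"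
  define \<mu>' where "\<mu>' s = (hess f (ReZ w + s *\<^sub>R \<iota>) 0 0 * fst \<iota> + hess f (ReZ w + s *\<^sub>R \<iota>) 0 1 * snd \<iota>) * of_real (fst t)
      + (hess f (ReZ w + s *\<^sub>R \<iota>) 1 0 * fst \<iota> + hess f (ReZ w + s *\<^sub>R \<iota>) 1 1 * snd \<iota>) * of_real (snd t)"
    for s :: real
  have segment: "ReZ w + s *\<^sub>R \<iota> \<in> strip2 R" if "s \<in> {0..1}" for s
  proof -
    have "\<bar>s * Im (fst w)\<bar> \<le> \<bar>Im (fst w)\<bar>" "\<bar>s * Im (snd w)\<bar> \<le> \<bar>Im (snd w)\<bar>"
      using that by (auto simp: abs_mult intro!: mult_left_le_one_le)
    then show ?thesis
      using w by (auto simp: strip2_def ReZ_def \<iota>_def scaleR_conv_of_real)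
  qed
  have \<iota>_norm: "sqrt ((cmod (fst \<iota>))\<^sup>2 + (cmod (snd \<iota>))\<^sup>2) = norm (Im (fst w), Im (snd w))"
    by (simp add: \<iota>_def norm_mult norm_Pair)
  have "((\<lambda>s. G (ReZ w + s *\<^sub>R \<iota>)) has_vector_derivative \<mu>' s) (at s)" if "s \<in> {0..1}" for s
    using has_vector_derivative_add[OF
        has_vector_derivative_mult_left[OF holo2_on_has_vector_derivative_line[OF f(1) segment[OF that]]]
        has_vector_derivative_mult_left[OF holo2_on_has_vector_derivative_line[OF f(2) segment[OF that]]]]
    by (simp add: G_def \<mu>'_def hess_def mult.commute)
  moreover have "norm (\<mu>' s) \<le> M * norm (Im (fst w), Im (snd w)) * norm t" if "s \<in> {0..1}" for s
  proof -
    have "norm (\<mu>' s) \<le> opnorm2 (hess f (ReZ w + s *\<^sub>R \<iota>)) 2 2 * sqrt ((cmod (fst \<iota>))\<^sup>2 + (cmod (snd \<iota>))\<^sup>2) * norm t"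
      unfolding \<mu>'_def by (intro order_trans[OF cmod_real_combination_le] mult_right_mono norm_hess_apply_le) simp
    also have "\<dots> \<le> M * norm (Im (fst w), Im (snd w)) * norm t"
      using M[OF segment[OF that]] unfolding \<iota>_norm by (intro mult_right_mono) simp_all
    finally show ?thesis .
  qed
  ultimately have "norm (G (ReZ w + 1 *\<^sub>R \<iota>) - G (ReZ w + 0 *\<^sub>R \<iota>)) \<le> M * norm (Im (fst w), Im (snd w)) * norm t"
    by (rule norm_diff_le_vector_derivative_bound)
  moreover have "ReZ w + \<iota> = w"
    by (simp add: ReZ_def \<iota>_def prod_eq_iff complex_eq_iff)
  ultimately show ?thesis
    by (simp add: G_def)
qed

lemma shift_diff_sub_Re_bound:
  assumes f: "holo2_on f (strip2 R)" "holo2_on (pd0 f) (strip2 R)" "holo2_on (pd1 f) (strip2 R)"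
    and M: "\<And>w. w \<in> strip2 R \<Longrightarrow> opnorm2 (hess f w) 2 2 \<le> M"
    and z: "z \<in> strip2 R"
  shows "cmod ((f z - f (z + cpair t)) - (f (ReZ z) - f (ReZ z + cpair t)))
           \<le> M * norm (Im (fst z), Im (snd z)) * norm t"
proof -
  define G where "G v = pd0 f v * of_real (fst t) + pd1 f v * of_real (snd t)" for v
  define k where "k = (\<lambda>s::real. f (z + s *\<^sub>R cpair t) - f (ReZ z + s *\<^sub>R cpair t))"
  have line: "z + s *\<^sub>R cpair t \<in> strip2 R" "ReZ z + s *\<^sub>R cpair t \<in> strip2 R" for s
    using z ReZ_in_strip2[OF z] by (simp_all add: strip2_add_scaleR_cpair)
  have "(k has_vector_derivative G (z + s *\<^sub>R cpair t) - G (ReZ (z + s *\<^sub>R cpair t))) (at s)" for s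
    using has_vector_derivative_diff[OF holo2_on_has_vector_derivative_line[OF f(1) line(1)]
        holo2_on_has_vector_derivative_line[OF f(1) line(2)]]
    by (simp add: k_def G_def ReZ_add_scaleR_cpair)
  moreover have "norm (G (z + s *\<^sub>R cpair t) - G (ReZ (z + s *\<^sub>R cpair t))) \<le> M * norm (Im (fst z), Im (snd z)) * norm t" for s
    using directional_pd_Re_bound[OF f(2,3) M line(1), where t = t] by (simp add: G_def)
  ultimately have "norm (k 1 - k 0) \<le> M * norm (Im (fst z), Im (snd z)) * norm t"
    by (rule norm_diff_le_vector_derivative_bound)
  then show ?thesis
    by (simp add: k_def norm_minus_commute algebra_simps)
qed

section \<open>Real parameters\<close>

lemma Collect_int_reindex_diff: "{g (k - m) | k::int. True} = {g k | k. True}"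
  by auto (metis add_diff_cancel)

lemma Collect_int_reindex_uminus: "{g (- k) | k::int. True} = {g k | k. True}"
  by auto (metis minus_minus)

lemma dist2pi_add_of_int: "dist2pi (t + of_int m * (2*pi)) = dist2pi t"
proof -
  have "\<bar>t + of_int m * (2*pi) - 2 * pi * of_int k\<bar> = \<bar>t - 2 * pi * of_int (k - m)\<bar>" for k
    by (simp add: algebra_simps)
  then show ?thesis
    unfolding dist2pi_def using Collect_int_reindex_diff[of "\<lambda>k. \<bar>t - 2 * pi * of_int k\<bar>" m] by simp
qed

lemma dist2pi_uminus: "dist2pi (- t) = dist2pi t"
proof -
  have "\<bar>- t - 2 * pi * of_int k\<bar> = \<bar>t - 2 * pi * of_int (- k)\<bar>" for k
    by (simp add: abs_minus_commute)
  then show ?thesis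
    unfolding dist2pi_def using Collect_int_reindex_uminus[of "\<lambda>k. \<bar>t - 2 * pi * of_int k\<bar>"] by simp
qed

lemma dist2pi_small:
  assumes "\<bar>t\<bar> \<le> pi"
  shows "dist2pi t = \<bar>t\<bar>"
  unfolding dist2pi_def
proof (rule cInf_eq_minimum)
  show "\<bar>t\<bar> \<in> {\<bar>t - 2 * pi * real_of_int k\<bar> | k. True}"
    by (rule CollectI, rule exI[of _ 0]) simp
  fix x assume "x \<in> {\<bar>t - 2 * pi * real_of_int k\<bar> | k. True}"
  then obtain k where x: "x = \<bar>t - 2 * pi * real_of_int k\<bar>"
    by blast
  show "\<bar>t\<bar> \<le> x"
  proof (cases "k = 0")
    case False
    then have "2 * pi \<le> \<bar>2 * pi * real_of_int k\<bar>"
      by (simp add: abs_mult)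
    then show ?thesis
      unfolding x using assms by linarith
  qed (simp add: x)
qed

lemma dist2pi_attained: obtains k :: int where "dist2pi t = \<bar>t - of_int k * (2*pi)\<bar>"
proof -
  define k where "k = round (t / (2*pi))"
  have "\<bar>t / (2*pi) - of_int k\<bar> \<le> 1 / 2"
    using of_int_round_abs_le[of "t / (2*pi)"] by (simp add: k_def abs_minus_commute)
  then have "\<bar>t - of_int k * (2*pi)\<bar> \<le> pi"
    by (simp add: field_simps abs_divide)
  moreover have "dist2pi t = dist2pi (t - of_int k * (2*pi))"
    using dist2pi_add_of_int[of "t - of_int k * (2*pi)" k] by simp
  ultimately show ?thesis
    using that dist2pi_small by auto
qed

lemma zeta_add_of_int: "zeta (x + (of_int k * (2*pi), of_int l * (2*pi))) = zeta x"
  by (simp add: zeta_def dist2pi_add_of_int)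

lemma zeta_uminus: "zeta (- x) = zeta x"
  by (simp add: zeta_def dist2pi_uminus)

lemma zeta_representative:
  obtains k l :: int where "zeta x = norm (x - (of_int k * (2*pi), of_int l * (2*pi)))"
proof -
  obtain k l :: int where "dist2pi (fst x) = \<bar>fst x - of_int k * (2*pi)\<bar>"
    and "dist2pi (snd x) = \<bar>snd x - of_int l * (2*pi)\<bar>"
    using dist2pi_attained by metis
  then show ?thesis
    using that[of k l] by (simp add: zeta_def norm_real_pair)
qed

lemma I2pi_representative: obtains k :: int where "t - of_int k * (2*pi) \<in> I2pi"
  using floor_divide_2pi_bounds[of t] that by (auto simp: I2pi_def)

lemma GammaR_add_of_int:
  assumes per0: "\<And>j x y. j < 3 \<Longrightarrow>
          \<gamma> j (complex_of_real (x + 2*pi), complex_of_real y) = \<gamma> j (complex_of_real x, complex_of_real y)"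
    and per1: "\<And>j x y. j < 3 \<Longrightarrow>
          \<gamma> j (complex_of_real x, complex_of_real (y + 2*pi)) = \<gamma> j (complex_of_real x, complex_of_real y)"
  shows "GammaR \<gamma> (x + (of_int k * (2*pi), of_int l * (2*pi))) = GammaR \<gamma> x"
proof -
  have "\<gamma> j (of_real (a + of_int k * (2*pi)), of_real (b + of_int l * (2*pi))) = \<gamma> j (of_real a, of_real b)"
    if "j < 3" for j a b
    using periodic_plus_of_int[of "\<lambda>s. \<gamma> j (of_real s, of_real (b + of_int l * (2*pi)))", OF per0[OF that]]
      periodic_plus_of_int[of "\<lambda>s. \<gamma> j (of_real a, of_real s)", OF per1[OF that]]
    by simp
  then show ?thesis
    by (simp add: GammaR_def)
qed

lemma GammaR_dist_lower_bound:
  assumes per0: "\<And>j x y. j < 3 \<Longrightarrow>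
          \<gamma> j (complex_of_real (x + 2*pi), complex_of_real y) = \<gamma> j (complex_of_real x, complex_of_real y)"
    and per1: "\<And>j x y. j < 3 \<Longrightarrow>
          \<gamma> j (complex_of_real x, complex_of_real (y + 2*pi)) = \<gamma> j (complex_of_real x, complex_of_real y)"
    and A1: "\<And>th et. th \<in> I2pi \<times> I2pi \<Longrightarrow> et \<in> I2pi \<times> I2pi \<Longrightarrow>
          norm (GammaR \<gamma> th - GammaR \<gamma> et) \<ge> C0 * zeta (fst th - fst et, snd th - snd et)"
  shows "C0 * zeta (x - y) \<le> norm (GammaR \<gamma> x - GammaR \<gamma> y)"
proof -
  obtain kx lx ky ly :: int where "fst x - of_int kx * (2*pi) \<in> I2pi" "snd x - of_int lx * (2*pi) \<in> I2pi"
    "fst y - of_int ky * (2*pi) \<in> I2pi" "snd y - of_int ly * (2*pi) \<in> I2pi"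
    using I2pi_representative by metis
  moreover define x' y' where "x' = x - (of_int kx * (2*pi), of_int lx * (2*pi))"
    and "y' = y - (of_int ky * (2*pi), of_int ly * (2*pi))"
  ultimately have "x' \<in> I2pi \<times> I2pi" "y' \<in> I2pi \<times> I2pi"
    by (simp_all add: mem_Times_iff)
  from A1[OF this] have "C0 * zeta (x' - y') \<le> norm (GammaR \<gamma> x' - GammaR \<gamma> y')"
    by (metis fst_diff snd_diff prod.collapse)
  moreover have "x - y = (x' - y') + (of_int (kx - ky) * (2*pi), of_int (lx - ly) * (2*pi))"
    by (simp add: x'_def y'_def prod_eq_iff algebra_simps)
  moreover have "GammaR \<gamma> (v + (of_int k * (2*pi), of_int l * (2*pi))) = GammaR \<gamma> v" for v k l
    using per0 per1 by (rule GammaR_add_of_int)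
  then have "GammaR \<gamma> x = GammaR \<gamma> x'" "GammaR \<gamma> y = GammaR \<gamma> y'"
    unfolding x'_def y'_def by (metis diff_add_cancel)+
  ultimately show ?thesis
    by (metis zeta_add_of_int)
qed

lemma GammaR_norm:
  "norm (GammaR g a - GammaR g e) = sqrt (\<Sum>j<3. (Re (g j (cpair a)) - Re (g j (cpair e)))\<^sup>2)"
  by (simp add: GammaR_def cpair_def norm_vec_def L2_set_def sum_3 numeral_3_eq_3 power2_abs numeral_2_eq_2)

lemma sum_sq_diff_cpair:
  assumes real: "\<And>j x y. j < 3 \<Longrightarrow> \<gamma> j (complex_of_real x, complex_of_real y) \<in> \<real>"
  shows "(\<Sum>j<3. (\<gamma> j (cpair x) - \<gamma> j (cpair y))\<^sup>2) = of_real ((norm (GammaR \<gamma> x - GammaR \<gamma> y))\<^sup>2)"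
proof -
  have "(\<gamma> j (cpair x) - \<gamma> j (cpair y))\<^sup>2 = of_real ((Re (\<gamma> j (cpair x)) - Re (\<gamma> j (cpair y)))\<^sup>2)"
    if "j < 3" for j
    using real[OF that, of "fst x" "snd x"] real[OF that, of "fst y" "snd y"]
    by (auto simp: cpair_def elim!: Reals_cases)
  then show ?thesis
    by (simp add: GammaR_norm sum_nonneg)
qed

lemma sq_dist_real_lower_bound:
  assumes real: "\<And>j x y. j < 3 \<Longrightarrow> \<gamma> j (complex_of_real x, complex_of_real y) \<in> \<real>"
    and per0: "\<And>j x y. j < 3 \<Longrightarrow>
          \<gamma> j (complex_of_real (x + 2*pi), complex_of_real y) = \<gamma> j (complex_of_real x, complex_of_real y)"
    and per1: "\<And>j x y. j < 3 \<Longrightarrow>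
          \<gamma> j (complex_of_real x, complex_of_real (y + 2*pi)) = \<gamma> j (complex_of_real x, complex_of_real y)"
    and A1: "\<And>th et. th \<in> I2pi \<times> I2pi \<Longrightarrow> et \<in> I2pi \<times> I2pi \<Longrightarrow>
          norm (GammaR \<gamma> th - GammaR \<gamma> et) \<ge> C0 * zeta (fst th - fst et, snd th - snd et)"
    and C0: "C0 \<ge> 0"
  shows "(C0 * zeta t)\<^sup>2 \<le> cmod (\<Sum>j<3. (\<gamma> j (cpair x) - \<gamma> j (cpair x + cpair t))\<^sup>2)"
proof -
  have "C0 * zeta t \<le> norm (GammaR \<gamma> x - GammaR \<gamma> (x + t))"
    using GammaR_dist_lower_bound[OF per0 per1 A1, of x "x + t"] by (simp add: zeta_uminus)
  then have "(C0 * zeta t)\<^sup>2 \<le> (norm (GammaR \<gamma> x - GammaR \<gamma> (x + t)))\<^sup>2"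
    using C0 by (intro power_mono) (simp_all add: zeta_def)
  moreover have "(\<Sum>j<3. (\<gamma> j (cpair x) - \<gamma> j (cpair (x + t)))\<^sup>2)
      = of_real ((norm (GammaR \<gamma> x - GammaR \<gamma> (x + t)))\<^sup>2)"
    using real by (rule sum_sq_diff_cpair)
  ultimately show ?thesis
    by (simp add: norm_power flip: cpair_add)
qed

lemma sum_squares_diff_bound:
  fixes a b :: "'i \<Rightarrow> complex"
  assumes plus: "\<And>j. j \<in> J \<Longrightarrow> cmod (a j + b j) \<le> P j * s"
    and minus: "\<And>j. j \<in> J \<Longrightarrow> cmod (a j - b j) \<le> Q j * s'"
    and "0 \<le> s" "0 \<le> s'"
  shows "cmod ((\<Sum>j\<in>J. (a j)\<^sup>2) - (\<Sum>j\<in>J. (b j)\<^sup>2)) \<le> L2_set P J * L2_set Q J * (s * s')"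
proof -
  have product_bound: "cmod ((a j + b j) * (a j - b j)) \<le> (P j * s) * (Q j * s')" if "j \<in> J" for j
    unfolding norm_mult using plus[OF that] minus[OF that] order_trans[OF norm_ge_zero plus[OF that]]
    by (intro mult_mono) simp_all
  have "(\<Sum>j\<in>J. (a j)\<^sup>2) - (\<Sum>j\<in>J. (b j)\<^sup>2) = (\<Sum>j\<in>J. (a j + b j) * (a j - b j))"
    by (simp add: power2_eq_square algebra_simps flip: sum_subtractf)
  then have "cmod ((\<Sum>j\<in>J. (a j)\<^sup>2) - (\<Sum>j\<in>J. (b j)\<^sup>2)) \<le> (\<Sum>j\<in>J. cmod ((a j + b j) * (a j - b j)))"
    by (simp add: norm_sum)
  also have "\<dots> \<le> (\<Sum>j\<in>J. (P j * s) * (Q j * s'))"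
    by (rule sum_mono) (rule product_bound)
  also have "\<dots> = (\<Sum>j\<in>J. P j * Q j) * (s * s')"
    by (simp add: sum_distrib_left mult_ac)
  also have "\<dots> \<le> (\<Sum>j\<in>J. \<bar>P j\<bar> * \<bar>Q j\<bar>) * (s * s')"
    using assms(3,4) by (intro mult_right_mono sum_mono) (auto simp flip: abs_mult)
  also have "\<dots> \<le> L2_set P J * L2_set Q J * (s * s')"
    using assms(3,4) by (intro mult_right_mono L2_set_mult_ineq) simp
  finally show ?thesis .
qed

lemma sq_dist_Re_perturbation:
  assumes an: "\<And>j. j \<in> J \<Longrightarrow> analytic2_on_cstrip (\<gamma> j) R"
    and per: "\<And>j. j \<in> J \<Longrightarrow> biperiodic R (\<gamma> j)" and z: "z \<in> strip2 R"
  shows "cmod ((\<Sum>j\<in>J. (\<gamma> j z - \<gamma> j (z + cpair t))\<^sup>2) - (\<Sum>j\<in>J. (\<gamma> j (ReZ z) - \<gamma> j (ReZ z + cpair t))\<^sup>2))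
     \<le> L2_set (\<lambda>j. M0j (\<gamma> j) R) J * L2_set (\<lambda>j. M1j (\<gamma> j) R) J * (norm t * (norm (Im (fst z), Im (snd z)) * norm t))"
proof (rule sum_squares_diff_bound)
  fix j assume j: "j \<in> J"
  note holo = analytic2_on_cstrip_imp_holo2_on
  show "cmod ((\<gamma> j z - \<gamma> j (z + cpair t)) + (\<gamma> j (ReZ z) - \<gamma> j (ReZ z + cpair t))) \<le> M0j (\<gamma> j) R * norm t"
    using shift_diff_add_Re_bound[OF holo[OF an[OF j]] opnorm2_grad_le_M0j[OF an[OF j] per[OF j]] z] .
  show "cmod ((\<gamma> j z - \<gamma> j (z + cpair t)) - (\<gamma> j (ReZ z) - \<gamma> j (ReZ z + cpair t)))
      \<le> M1j (\<gamma> j) R * (norm (Im (fst z), Im (snd z)) * norm t)"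
    using shift_diff_sub_Re_bound[OF holo[OF an[OF j]] holo[OF analytic2_on_cstrip_pd(1)[OF an[OF j]]]
        holo[OF analytic2_on_cstrip_pd(2)[OF an[OF j]]] opnorm2_hess_le_M1j[OF an[OF j] per[OF j]] z]
    by (simp add: mult.assoc)
qed simp_all

lemma norm_Im_le_strip2:
  assumes "z \<in> strip2 r"
  shows "norm (Im (fst z), Im (snd z)) \<le> sqrt 2 * r"
proof -
  have Im: "\<bar>Im (fst z)\<bar> \<le> r" "\<bar>Im (snd z)\<bar> \<le> r"
    using assms by (auto simp: strip2_def)
  then have "(Im (fst z))\<^sup>2 \<le> r\<^sup>2" "(Im (snd z))\<^sup>2 \<le> r\<^sup>2"
    using power_mono[OF Im(1) abs_ge_zero, of 2] power_mono[OF Im(2) abs_ge_zero, of 2] by simp_all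
  then have "(Im (fst z))\<^sup>2 + (Im (snd z))\<^sup>2 \<le> (sqrt 2 * r)\<^sup>2"
    by (simp add: power_mult_distrib)
  then show ?thesis
    using Im by (simp add: norm_Pair real_le_lsqrt)
qed

lemma biperiodic_shift_representative:
  assumes per: "\<And>j. j \<in> J \<Longrightarrow> biperiodic R (\<gamma> j)" and z: "z \<in> strip2 R"
  obtains t where "norm t = zeta th" "zeta t = zeta th"
    "\<And>j. j \<in> J \<Longrightarrow> \<gamma> j (z + cpair th) = \<gamma> j (z + cpair t)"
proof -
  obtain k l :: int where kl: "zeta th = norm (th - (of_int k * (2*pi), of_int l * (2*pi)))"
    by (rule zeta_representative)
  define t where "t = th - (of_int k * (2*pi), of_int l * (2*pi))"
  have th: "z + cpair th = z + cpair t + cpair (of_int k * (2*pi), of_int l * (2*pi))"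
    by (simp add: t_def add.assoc flip: cpair_add)
  have "\<gamma> j (z + cpair th) = \<gamma> j (z + cpair t)" if "j \<in> J" for j
    unfolding th by (rule biperiodic_plus_of_int[OF per[OF that] strip2_add_cpair[OF z]])
  moreover have "zeta t = zeta th"
    using zeta_add_of_int[of t k l] by (simp add: t_def)
  ultimately show ?thesis
    using that kl by (simp add: t_def)
qed

lemma sq_dist_lower_bound:
  assumes real: "\<And>j x y. j < 3 \<Longrightarrow> \<gamma> j (complex_of_real x, complex_of_real y) \<in> \<real>"
    and per0: "\<And>j x y. j < 3 \<Longrightarrow>
          \<gamma> j (complex_of_real (x + 2*pi), complex_of_real y) = \<gamma> j (complex_of_real x, complex_of_real y)"
    and per1: "\<And>j x y. j < 3 \<Longrightarrow>
          \<gamma> j (complex_of_real x, complex_of_real (y + 2*pi)) = \<gamma> j (complex_of_real x, complex_of_real y)"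
    and A1: "\<And>th et. th \<in> I2pi \<times> I2pi \<Longrightarrow> et \<in> I2pi \<times> I2pi \<Longrightarrow>
          norm (GammaR \<gamma> th - GammaR \<gamma> et) \<ge> C0 * zeta (fst th - fst et, snd th - snd et)"
    and C0: "C0 \<ge> 0"
    and an: "\<And>j. j < 3 \<Longrightarrow> analytic2_on_cstrip (\<gamma> j) R"
    and z: "z \<in> strip2 r" and r: "r \<le> R"
  shows "(C0\<^sup>2 - sqrt 2 * L2_set (\<lambda>j. M0j (\<gamma> j) R) {..<3} * L2_set (\<lambda>j. M1j (\<gamma> j) R) {..<3} * r) * (zeta th)\<^sup>2
           \<le> cmod (\<Sum>j<3. (\<gamma> j z - \<gamma> j (z + cpair th))\<^sup>2)"
proof -
  define M where "M = L2_set (\<lambda>j. M0j (\<gamma> j) R) {..<3} * L2_set (\<lambda>j. M1j (\<gamma> j) R) {..<3}"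
  have zR: "z \<in> strip2 R"
    using z r by (auto simp: strip2_def)
  have per: "biperiodic R (\<gamma> j)" if "j < 3" for j
    using that by (intro biperiodic_if_periodic_on_reals analytic2_on_cstrip_imp_holo2_on an per0 per1)
  obtain t where t: "norm t = zeta th" "zeta t = zeta th"
    and shift: "\<And>j. j \<in> {..<3} \<Longrightarrow> \<gamma> j (z + cpair th) = \<gamma> j (z + cpair t)"
    using biperiodic_shift_representative[of "{..<3}" R \<gamma> z th] per zR by auto
  define dz where "dz = (\<Sum>j<3. (\<gamma> j z - \<gamma> j (z + cpair t))\<^sup>2)"
  define dx where "dx = (\<Sum>j<3. (\<gamma> j (ReZ z) - \<gamma> j (ReZ z + cpair t))\<^sup>2)"
  have "C0\<^sup>2 * (zeta th)\<^sup>2 \<le> cmod dx"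
    using sq_dist_real_lower_bound[OF real per0 per1 A1 C0, of t "(Re (fst z), Re (snd z))"] t
    by (simp add: dx_def ReZ_eq_cpair power_mult_distrib)
  moreover have "cmod (dz - dx) \<le> M * (zeta th)\<^sup>2 * norm (Im (fst z), Im (snd z))"
    using sq_dist_Re_perturbation[OF an per zR, where J = "{..<3}" and t = t] t
    by (simp add: dz_def dx_def M_def power2_eq_square mult_ac)
  moreover have "M * (zeta th)\<^sup>2 * norm (Im (fst z), Im (snd z)) \<le> M * (zeta th)\<^sup>2 * (sqrt 2 * r)"
    using norm_Im_le_strip2[OF z] by (intro mult_left_mono) (simp_all add: M_def)
  then have "M * (zeta th)\<^sup>2 * norm (Im (fst z), Im (snd z)) \<le> sqrt 2 * M * r * (zeta th)\<^sup>2"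
    by (simp add: mult_ac)
  moreover have "cmod dx - cmod dz \<le> cmod (dz - dx)"
    by (metis norm_minus_commute norm_triangle_ineq2)
  ultimately have "(C0\<^sup>2 - sqrt 2 * M * r) * (zeta th)\<^sup>2 \<le> cmod dz"
    unfolding left_diff_distrib by linarith
  moreover have "(\<Sum>j<3. (\<gamma> j z - \<gamma> j (z + cpair th))\<^sup>2) = dz"
    unfolding dz_def using shift by (intro sum.cong) auto
  ultimately show ?thesis
    by (simp add: M_def mult.assoc)
qed

theorem lemma2:
  fixes \<gamma> :: "nat \<Rightarrow> complex \<times> complex \<Rightarrow> complex"
    and C0 R0 b :: real
    and \<Omega> :: "(real^3) set"
  defines "M0 \<equiv> sqrt (\<Sum>j<3. (M0j (\<gamma> j) R0)\<^sup>2)"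
    and "M1 \<equiv> sqrt (\<Sum>j<3. (M1j (\<gamma> j) R0)\<^sup>2)"
  defines "bmax \<equiv> min (C0\<^sup>2 / (sqrt 2 * M0 * M1)) (R0 / 2)"
  defines "bstar \<equiv> (b + bmax) / 2"
  defines "C1 \<equiv> C0\<^sup>2 - sqrt 2 * M0 * M1 * bstar"
  assumes real_on_reals: "\<And>j x y. j < 3 \<Longrightarrow> \<gamma> j (complex_of_real x, complex_of_real y) \<in> \<real>"
    and periodic0: "\<And>j x y. j < 3 \<Longrightarrow>
          \<gamma> j (complex_of_real (x + 2*pi), complex_of_real y) = \<gamma> j (complex_of_real x, complex_of_real y)"
    and periodic1: "\<And>j x y. j < 3 \<Longrightarrow>
          \<gamma> j (complex_of_real x, complex_of_real (y + 2*pi)) = \<gamma> j (complex_of_real x, complex_of_real y)"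
    and region: "open \<Omega>" "bounded \<Omega>" "frontier \<Omega> = GammaR \<gamma> ` (I2pi \<times> I2pi)"
      "diffeomorphic_Cinf \<Omega> solid_torus"
    and C0_pos: "C0 > 0"
    and A1: "\<And>th et. th \<in> I2pi \<times> I2pi \<Longrightarrow> et \<in> I2pi \<times> I2pi \<Longrightarrow>
          norm (GammaR \<gamma> th - GammaR \<gamma> et) \<ge> C0 * zeta (fst th - fst et, snd th - snd et)"
    and R0_pos: "R0 > 0"
    and A2: "\<And>j. j < 3 \<Longrightarrow> analytic2_on_cstrip (\<gamma> j) R0"
    and b_pos: "0 < b" and b_lt: "b < bmax"
  shows "\<forall>z \<in> strip2 bstar. \<forall>th \<in> I2pi \<times> I2pi.
           cmod (\<Sum>j<3. (\<gamma> j z - \<gamma> j (fst z + complex_of_real (fst th), snd z + complex_of_real (snd th)))\<^sup>2)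
             \<ge> C1 * (zeta th)\<^sup>2"
proof (intro ballI)
  \<comment> \<open>The hypotheses on \<open>\<Omega>\<close> only give the geometric meaning of \<open>\<Gamma>\<close>; the estimate does not use them.\<close>
  fix z th
  assume "z \<in> strip2 bstar"
  moreover have "bstar \<le> R0"
    using b_pos b_lt R0_pos unfolding bstar_def bmax_def by auto
  ultimately have "(C0\<^sup>2 - sqrt 2 * M0 * M1 * bstar) * (zeta th)\<^sup>2
      \<le> cmod (\<Sum>j<3. (\<gamma> j z - \<gamma> j (z + cpair th))\<^sup>2)"
    unfolding M0_def M1_def using C0_pos
    by (intro sq_dist_lower_bound[OF real_on_reals periodic0 periodic1 A1 _ A2, unfolded L2_set_def]) auto
  then show "cmod (\<Sum>j<3. (\<gamma> j z - \<gamma> j (fst z + complex_of_real (fst th), snd z + complex_of_real (snd th)))\<^sup>2)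
      \<ge> C1 * (zeta th)\<^sup>2"
    by (simp add: C1_def add_cpair_eq)
qed

end
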